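(* Let $a$ and $b$ be coprime integers and let $\ell\in G_{(a,b)}$ with $\ell\notin\{1,2\}$. Then all elements of $\mathcal{K}_{(a,b)}(\ell)$ have the same parity.
   Context: For integers $x,y$, $G_{(x,y)}$ is the set of positive integers $n$ such that $n\mid(x^k+y^k)$ for some positive integer $k$; for such $n$, $\mathcal{K}_{(x,y)}(n)=\{k\text{ positive integer}: n\mid(x^k+y^k)\}$. *)

theory Defs
  imports Main
begin

definition G :: "int \<Rightarrow> int \<Rightarrow> nat set" where
  "G x y = {n. n > 0 \<and> (\<exists>k::nat. k > 0 \<and> int n dvd (x ^ k + y ^ k))}"

definition K :: "int \<Rightarrow> int \<Rightarrow> nat \<Rightarrow> nat set" where
  "K x y n = {k. k > 0 \<and> int n dvd (x ^ k + y ^ k)}"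

end

theory Submission
  imports Defs "HOL-Number_Theory.Cong"
begin

(* If l divides a^j + b^j with j odd and a^k + b^k with k even, then raising the two
   congruences a^j = -b^j and a^k = -b^k to the powers k and j gives a^(jk) = b^(jk) and
   a^(jk) = -b^(jk) mod l, so l divides 2 b^(jk). Since any common divisor of l and b also
   divides a^j, coprimality of a and b makes l coprime to b, hence l divides 2. *)

lemma dvd_two_mul_power_if_power_sums_of_opposite_parity:
  fixes a b n :: int
  assumes odd_sum: "n dvd a ^ j + b ^ j" "odd j"
    and even_sum: "n dvd a ^ k + b ^ k" "even k"
  shows "n dvd 2 * b ^ (j * k)"
proof -
  have "[(a ^ j) ^ k = (- (b ^ j)) ^ k] (mod n)"
    using odd_sum(1) by (intro cong_pow) (simp add: cong_iff_dvd_diff)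
  then have pow_eq: "[a ^ (j * k) = b ^ (j * k)] (mod n)"
    using even_sum(2) by (simp add: power_mult)
  have "[(a ^ k) ^ j = (- (b ^ k)) ^ j] (mod n)"
    using even_sum(1) by (intro cong_pow) (simp add: cong_iff_dvd_diff)
  then have pow_eq_neg: "[a ^ (j * k) = - (b ^ (j * k))] (mod n)"
    using odd_sum(2) by (simp add: power_mult[symmetric] mult.commute)
  have "[b ^ (j * k) = - (b ^ (j * k))] (mod n)"
    using pow_eq pow_eq_neg by (meson cong_sym cong_trans)
  then show ?thesis
    by (simp add: cong_iff_dvd_diff)
qed

lemma coprime_if_dvd_power_sum:
  fixes a b n :: int
  assumes "coprime a b" "k > 0" "n dvd a ^ k + b ^ k"
  shows "coprime n b"
proof (rule coprimeI)
  fix d assume d_n: "d dvd n" and d_b: "d dvd b"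
  have "d dvd b ^ k"
    using d_b \<open>k > 0\<close> by (simp add: dvd_power dvd_trans[OF d_b])
  moreover have "d dvd a ^ k + b ^ k"
    using d_n assms(3) by (rule dvd_trans)
  ultimately have "d dvd a ^ k"
    by (simp add: dvd_add_left_iff)
  then show "is_unit d"
    using d_b \<open>coprime a b\<close> by (meson coprime_common_divisor coprime_power_left_iff)
qed

lemma dvd_two_if_power_sums_of_opposite_parity:
  fixes a b n :: int
  assumes "coprime a b"
    and "j > 0" "n dvd a ^ j + b ^ j" "odd j"
    and "n dvd a ^ k + b ^ k" "even k"
  shows "n dvd 2"
proof -
  have "coprime n (b ^ (j * k))"
    using coprime_if_dvd_power_sum[OF assms(1-3)] by simp
  moreover have "n dvd 2 * b ^ (j * k)"
    using assms(3-6) by (rule dvd_two_mul_power_if_power_sums_of_opposite_parity)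
  ultimately show ?thesis
    by (simp add: coprime_dvd_mult_left_iff)
qed

theorem lemma2p12:
  fixes a b :: int and l :: nat
  assumes "coprime a b"
    and "l \<in> G a b"
    and "l \<notin> {1, 2}"
  shows "\<forall>k1 \<in> K a b l. \<forall>k2 \<in> K a b l. even k1 \<longleftrightarrow> even k2"
proof -
  have "\<not> int l dvd 2"
  proof
    assume "int l dvd 2"
    then have "l dvd 2" by presburger
    moreover have "l > 0" using assms(2) by (simp add: G_def)
    ultimately show False
      using assms(3) dvd_imp_le[of l 2] by auto
  qed
  then have "\<not> (odd j \<and> even k)" if "j \<in> K a b l" "k \<in> K a b l" for j k
    using that dvd_two_if_power_sums_of_opposite_parity[OF assms(1), of j "int l" k]
    by (auto simp: K_def)
  then show ?thesis by blast
qed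

end
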